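(* Let $d,n\ge 1$, let $\boldsymbol{a}_1,\ldots,\boldsymbol{a}_n\in\mathbf{R}^d$, let $w_1,\ldots,w_n>0$, fix $\varepsilon>0$ and $1\le p\le 2$. Define $\Phi(\boldsymbol{x})=\sum_{j=1}^n w_j\,(\lVert\boldsymbol{x}-\boldsymbol{a}_j\rVert^2+\varepsilon)^{p/2}$ and let $\boldsymbol{x}^\star$ be its unique global minimizer. Let $\boldsymbol{x}^{(0)}\in\mathbf{R}^d$ be arbitrary and define, for $t\ge 0$, $$\mu_j^{(t)}=w_j\,(\lVert\boldsymbol{x}^{(t)}-\boldsymbol{a}_j\rVert^2+\varepsilon)^{p/2-1},\qquad \boldsymbol{x}^{(t+1)}=\frac{\sum_j\mu_j^{(t)}\boldsymbol{a}_j}{\sum_j\mu_j^{(t)}}.$$ Then there exist a constant $\nu<1$ and $T\ge 0$ such that for all $t\ge T$, $$\Phi(\boldsymbol{x}^{(t+1)})-\Phi(\boldsymbol{x}^\star)\le\nu\big(\Phi(\boldsymbol{x}^{(t)})-\Phi(\boldsymbol{x}^\star)\big).$$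
   Context: $\lVert\cdot\rVert$ is the Euclidean norm on $\mathbf{R}^d$. *)

theory Defs
  imports "HOL-Analysis.Analysis"
begin

definition Phi :: "nat \<Rightarrow> (nat \<Rightarrow> real) \<Rightarrow> (nat \<Rightarrow> 'a::euclidean_space) \<Rightarrow> real \<Rightarrow> real \<Rightarrow> 'a \<Rightarrow> real" where
  "Phi n w a eps p x = (\<Sum>j<n. w j * (norm (x - a j) ^ 2 + eps) powr (p / 2))"

definition irls_mu :: "(nat \<Rightarrow> real) \<Rightarrow> (nat \<Rightarrow> 'a::euclidean_space) \<Rightarrow> real \<Rightarrow> real \<Rightarrow> 'a \<Rightarrow> nat \<Rightarrow> real" where
  "irls_mu w a eps p x j = w j * (norm (x - a j) ^ 2 + eps) powr (p / 2 - 1)"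

end

theory Submission
  imports Defs
begin

text \<open>
  The IRLS update minimises the quadratic majoriser of \<open>\<Phi>\<close> obtained from the concavity of
  \<open>u \<mapsto> u powr (p/2)\<close>, which gives the sufficient decrease
  \<open>\<Phi> x\<^sup>+ \<le> \<Phi> x - (p/2) M \<parallel>x - x\<^sup>+\<parallel>\<^sup>2\<close> with \<open>M = \<Sum>\<^sub>j \<mu>\<^sub>j \<le> \<epsilon> powr (p/2 - 1) \<Sum>\<^sub>j w\<^sub>j\<close>.
  All iterates and the minimiser lie in the sublevel set \<open>{y. \<Phi> y \<le> \<Phi> (x 0)}\<close>, on which
  \<open>\<parallel>x - a\<^sub>j\<parallel>\<^sup>2 + \<epsilon> \<le> Q\<close>; there a second-order Taylor bound makes \<open>\<Phi>\<close> strongly convex with modulus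
  \<open>(p/2) \<epsilon> Q powr (p/2 - 2) \<Sum>\<^sub>j w\<^sub>j\<close>, the gradient at \<open>x\<close> being \<open>p M (x - x\<^sup>+)\<close>.
  Sufficient decrease and strong convexity give the rate \<open>1 - (\<epsilon>/Q) powr (2 - p/2)\<close>.
\<close>

lemma powr_le_tangent:
  fixes A B s :: real
  assumes "0 < A" "0 < B" "0 \<le> s" "s \<le> 1"
  shows "B powr s \<le> A powr s + s * A powr (s - 1) * (B - A)"
proof -
  have young: "A powr (1 - s) * B powr s \<le> (1 - s) * A + s * B"
    using Youngs_inequality_0[of "1 - s" s A B] assms by auto
  have "B powr s = A powr (s - 1) * (A powr (1 - s) * B powr s)"
    using assms by (simp add: powr_add[symmetric])
  also have "\<dots> \<le> A powr (s - 1) * ((1 - s) * A + s * B)"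
    using young assms by (intro mult_left_mono) auto
  also have "\<dots> = A powr s + s * A powr (s - 1) * (B - A)"
    using assms by (simp add: powr_diff field_simps)
  finally show ?thesis .
qed

lemma taylor2_lower_bound:
  fixes f f' f'' :: "real \<Rightarrow> real"
  assumes "0 < h"
    and "\<And>t. 0 \<le> t \<Longrightarrow> t \<le> h \<Longrightarrow> (f has_real_derivative f' t) (at t)"
    and "\<And>t. 0 \<le> t \<Longrightarrow> t \<le> h \<Longrightarrow> (f' has_real_derivative f'' t) (at t)"
    and "\<And>t. 0 \<le> t \<Longrightarrow> t \<le> h \<Longrightarrow> k \<le> f'' t"
  shows "f 0 + f' 0 * h + k / 2 * h^2 \<le> f h"
proof -
  define diff where "diff m = (if m = 0 then f else if m = 1 then f' else f'')" for m :: nat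
  have "\<forall>m t. m < 2 \<and> 0 \<le> t \<and> t \<le> h \<longrightarrow> (diff m has_real_derivative diff (Suc m) t) (at t)"
    using assms(2,3) by (auto simp: diff_def less_2_cases_iff)
  then obtain t where t: "0 < t" "t < h"
    and taylor: "f h = (\<Sum>m<2. diff m 0 / fact m * h ^ m) + diff 2 t / fact 2 * h ^ 2"
    using Maclaurin[of h 2 diff f] assms(1) by (auto simp: diff_def)
  have "k / 2 * h^2 \<le> f'' t / 2 * h^2"
    using assms(4)[of t] t by (intro mult_right_mono divide_right_mono) auto
  then show ?thesis
    using taylor by (simp add: diff_def eval_nat_numeral)
qed

text \<open>The discriminant hypothesis keeps \<open>q t = a + b t + c t\<^sup>2\<close> above \<open>eps\<close>, which together with
  \<open>s \<ge> 1/2\<close> bounds the second derivative of \<open>q t powr s\<close> on \<open>[0, 1]\<close> below by \<open>2 s eps Q powr (s - 2) c\<close>.\<close>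

lemma powr_quadratic_lower_bound:
  fixes a b c eps s Q :: real
  assumes eps: "0 < eps" and s: "1/2 \<le> s" "s \<le> 1" and c: "0 \<le> c"
    and a: "eps \<le> a" and discr: "b^2 \<le> 4 * c * (a - eps)"
    and Q: "a \<le> Q" "a + b + c \<le> Q"
  shows "a powr s + s * a powr (s - 1) * b + s * eps * Q powr (s - 2) * c \<le> (a + b + c) powr s"
proof -
  define q where "q t = a + b * t + c * t^2" for t
  define q' where "q' t = b + 2 * c * t" for t
  have q'_sq: "(q' t)^2 \<le> 4 * c * (q t - eps)" for t
    using discr by (simp add: q_def q'_def power2_eq_square algebra_simps)
  have q_ge: "eps \<le> q t" for t
  proof (cases "c = 0")
    case True
    then show ?thesis using discr a by (simp add: q_def)
  next
    case False
    have "0 \<le> 4 * c * (q t - eps)" using q'_sq[of t] by (meson order_trans zero_le_power2)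
    then show ?thesis using c False by (simp add: zero_le_mult_iff)
  qed
  have q_pos: "0 < q t" for t using q_ge[of t] eps by linarith
  have q_le: "q t \<le> Q" if "0 \<le> t" "t \<le> 1" for t
  proof -
    have "q t = (1 - t) * a + t * (a + b + c) - c * t * (1 - t)"
      by (simp add: q_def power2_eq_square algebra_simps)
    also have "\<dots> \<le> (1 - t) * Q + t * Q"
    proof -
      have "0 \<le> c * t * (1 - t)" using that c by simp
      moreover have "(1 - t) * a \<le> (1 - t) * Q" using that Q(1) by (intro mult_left_mono) auto
      moreover have "t * (a + b + c) \<le> t * Q" using that Q(2) by (intro mult_left_mono) auto
      ultimately show ?thesis by linarith
    qed
    finally show ?thesis by (simp add: algebra_simps)
  qed
  have dq: "(q has_real_derivative q' t) (at t)" for t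
    unfolding q_def q'_def by (auto intro!: derivative_eq_intros simp: power2_eq_square)
  have dq': "(q' has_real_derivative 2 * c) (at t)" for t
    unfolding q'_def by (auto intro!: derivative_eq_intros)
  define f' where "f' t = s * q t powr (s - 1) * q' t" for t
  define f'' where "f'' t = s * (s - 1) * q t powr (s - 2) * (q' t)^2 + 2 * c * s * q t powr (s - 1)" for t
  have df: "((\<lambda>t. q t powr s) has_real_derivative f' t) (at t)" for t
    using DERIV_fun_powr[OF dq q_pos, of s] by (simp add: f'_def)
  have df': "(f' has_real_derivative f'' t) (at t)" for t
    unfolding f'_def[abs_def]
    using DERIV_mult[OF DERIV_cmult[OF DERIV_fun_powr[OF dq[of t] q_pos[of t], of "s - 1"]] dq'[of t], of s]
    by (simp add: f''_def power2_eq_square mult_ac)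
  have f''_ge: "2 * s * eps * Q powr (s - 2) * c \<le> f'' t" if "0 \<le> t" "t \<le> 1" for t
  proof -
    have "2 * c * eps \<le> (s - 1) * (q' t)^2 + 2 * c * q t"
    proof -
      have "(s - 1) * (4 * c * (q t - eps)) \<le> (s - 1) * (q' t)^2"
        using q'_sq[of t] s by (intro mult_left_mono_neg) auto
      moreover have "0 \<le> c * (4 * s - 2) * (q t - eps)" using c s q_ge[of t] by simp
      ultimately show ?thesis by (simp add: algebra_simps)
    qed
    moreover have "Q powr (s - 2) \<le> q t powr (s - 2)"
      using q_pos q_le[OF that] s by (intro powr_mono2') auto
    ultimately have "s * Q powr (s - 2) * (2 * c * eps) \<le> s * q t powr (s - 2) * ((s - 1) * (q' t)^2 + 2 * c * q t)"
      using s c eps by (intro mult_mono mult_left_mono) auto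
    also have "\<dots> = f'' t"
      using q_pos[of t] by (simp add: f''_def powr_diff power2_eq_square field_simps)
    finally show ?thesis by (simp add: algebra_simps)
  qed
  have "q 0 powr s + f' 0 * 1 + 2 * s * eps * Q powr (s - 2) * c / 2 * 1^2 \<le> q 1 powr s"
    by (rule taylor2_lower_bound[OF zero_less_one df df' f''_ge])
  then show ?thesis by (simp add: q_def f'_def q'_def)
qed

lemma powr_norm_sq_lower_bound:
  fixes u h :: "'a::real_inner"
  assumes eps: "0 < eps" and s: "1/2 \<le> s" "s \<le> 1"
    and Q: "norm u ^ 2 + eps \<le> Q" "norm (u + h) ^ 2 + eps \<le> Q"
  shows "(norm u ^ 2 + eps) powr s + 2 * s * (norm u ^ 2 + eps) powr (s - 1) * inner u h
           + s * eps * Q powr (s - 2) * norm h ^ 2 \<le> (norm (u + h) ^ 2 + eps) powr s"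
proof -
  have expand: "norm (u + h) ^ 2 + eps = (norm u ^ 2 + eps) + 2 * inner u h + norm h ^ 2"
    by (simp add: power2_norm_eq_inner inner_add_left inner_add_right inner_commute)
  have "\<bar>inner u h\<bar> ^ 2 \<le> (norm u * norm h) ^ 2"
    by (intro power_mono Cauchy_Schwarz_ineq2) auto
  then have "(2 * inner u h) ^ 2 \<le> 4 * norm h ^ 2 * ((norm u ^ 2 + eps) - eps)"
    by (simp add: algebra_simps)
  from powr_quadratic_lower_bound[OF eps s _ _ this Q(1)] Q(2) show ?thesis
    unfolding expand by (simp add: mult_ac)
qed

lemma sum_inner_weighted_mean:
  fixes \<mu> :: "'i \<Rightarrow> real" and a :: "'i \<Rightarrow> 'a::real_inner"
  assumes "(\<Sum>j\<in>S. \<mu> j) \<noteq> 0"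
  shows "(\<Sum>j\<in>S. \<mu> j * inner (x - a j) h)
           = (\<Sum>j\<in>S. \<mu> j) * inner (x - (\<Sum>j\<in>S. \<mu> j *\<^sub>R a j) /\<^sub>R (\<Sum>j\<in>S. \<mu> j)) h"
proof -
  have "(\<Sum>j\<in>S. \<mu> j * inner (x - a j) h) = (\<Sum>j\<in>S. \<mu> j) * inner x h - inner (\<Sum>j\<in>S. \<mu> j *\<^sub>R a j) h"
    by (simp add: inner_diff_left inner_sum_left sum_subtractf sum_distrib_right right_diff_distrib)
  with assms show ?thesis
    by (simp add: inner_diff_left right_diff_distrib)
qed

lemma linear_rate_of_descent_and_growth:
  fixes c C m G H P1 P Pmin :: real
  assumes c: "0 < c" "c \<le> C" and m: "0 < m" and "Pmin \<le> P"
    and descent: "P1 \<le> P - c * G^2"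
    and growth: "P - 2 * c * G * H + m * H^2 \<le> Pmin"
  shows "P1 - Pmin \<le> (1 - m / C) * (P - Pmin)"
proof -
  have "m * (2 * c * G * H - m * H^2) \<le> (c * G)^2"
    using zero_le_power2[of "c * G - m * H"] by (simp add: power2_eq_square algebra_simps)
  moreover have "m * (P - Pmin) \<le> m * (2 * c * G * H - m * H^2)"
    using growth m by (intro mult_left_mono) auto
  ultimately have "m * (P - Pmin) \<le> c * (c * G^2)"
    by (simp add: power2_eq_square mult_ac)
  then have "m * (P - Pmin) / c \<le> c * G^2"
    using c by (simp add: pos_divide_le_eq mult.commute)
  moreover have "m * (P - Pmin) / C \<le> m * (P - Pmin) / c"
    using c m \<open>Pmin \<le> P\<close> by (intro divide_left_mono) auto
  ultimately show ?thesis
    using descent by (simp add: algebra_simps)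
qed

locale smoothed_fermat =
  fixes n :: nat and w :: "nat \<Rightarrow> real" and a :: "nat \<Rightarrow> 'a::euclidean_space" and eps p :: real
  assumes n_pos: "0 < n" and w_pos: "\<And>j. j < n \<Longrightarrow> 0 < w j" and eps_pos: "0 < eps"
begin

abbreviation \<Phi> :: "'a \<Rightarrow> real" where "\<Phi> \<equiv> Phi n w a eps p"
abbreviation \<mu> :: "'a \<Rightarrow> nat \<Rightarrow> real" where "\<mu> \<equiv> irls_mu w a eps p"

definition irls_mass :: "'a \<Rightarrow> real" where
  "irls_mass x = (\<Sum>j<n. \<mu> x j)"

definition irls_step :: "'a \<Rightarrow> 'a" where
  "irls_step x = (\<Sum>j<n. \<mu> x j *\<^sub>R a j) /\<^sub>R irls_mass x"

lemma dist_sq_eps_pos: "0 < norm (x - a j) ^ 2 + eps"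
  using eps_pos by (simp add: add_nonneg_pos)

lemma irls_mu_pos: "j < n \<Longrightarrow> 0 < \<mu> x j"
  unfolding irls_mu_def using w_pos dist_sq_eps_pos[of x j] by (intro mult_pos_pos) auto

lemma irls_mass_pos: "0 < irls_mass x"
  unfolding irls_mass_def using n_pos irls_mu_pos by (intro sum_pos) auto

lemma irls_mass_le:
  assumes "p \<le> 2"
  shows "irls_mass x \<le> (\<Sum>j<n. w j) * eps powr (p/2 - 1)"
proof -
  have "\<mu> x j \<le> w j * eps powr (p/2 - 1)" if "j < n" for j
    unfolding irls_mu_def using assms eps_pos w_pos[OF that]
    by (intro mult_left_mono powr_mono2') auto
  then show ?thesis
    unfolding irls_mass_def sum_distrib_right by (intro sum_mono) auto
qed

lemma sum_irls_mu_inner: "(\<Sum>j<n. \<mu> x j * inner (x - a j) h) = irls_mass x * inner (x - irls_step x) h"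
  unfolding irls_mass_def irls_step_def
  using irls_mass_pos[of x] by (intro sum_inner_weighted_mean) (simp add: irls_mass_def)

lemma Phi_irls_step_le:
  assumes "0 \<le> p" "p \<le> 2"
  shows "\<Phi> (irls_step x) \<le> \<Phi> x - p/2 * irls_mass x * norm (x - irls_step x) ^ 2"
proof -
  define v where "v = irls_step x"
  have term_le: "w j * (norm (v - a j) ^ 2 + eps) powr (p/2)
      \<le> w j * (norm (x - a j) ^ 2 + eps) powr (p/2)
         + p/2 * (2 * (\<mu> x j * inner (x - a j) (v - x)) + \<mu> x j * norm (v - x) ^ 2)" if "j < n" for j
  proof -
    define A where "A = norm (x - a j) ^ 2 + eps"
    define B where "B = norm (v - a j) ^ 2 + eps"
    have "B - A = 2 * inner (x - a j) (v - x) + norm (v - x) ^ 2"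
      using dot_norm[of "x - a j" "v - x"] by (simp add: A_def B_def)
    have "w j * B powr (p/2) \<le> w j * (A powr (p/2) + p/2 * A powr (p/2 - 1) * (B - A))"
      unfolding A_def B_def
      using assms w_pos[OF that] by (intro mult_left_mono powr_le_tangent dist_sq_eps_pos) auto
    also have "\<dots> = w j * A powr (p/2) + p/2 * (\<mu> x j * (B - A))"
      by (simp add: A_def irls_mu_def distrib_left mult_ac)
    finally show ?thesis
      unfolding \<open>B - A = _\<close> by (simp add: A_def B_def algebra_simps)
  qed
  have "\<Phi> v \<le> (\<Sum>j<n. w j * (norm (x - a j) ^ 2 + eps) powr (p/2)
         + p/2 * (2 * (\<mu> x j * inner (x - a j) (v - x)) + \<mu> x j * norm (v - x) ^ 2))"
    unfolding Phi_def using term_le by (intro sum_mono) auto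
  also have "\<dots> = \<Phi> x + p/2 * (2 * irls_mass x * inner (x - v) (v - x) + irls_mass x * norm (v - x) ^ 2)"
    using sum_irls_mu_inner[of x "v - x"]
    unfolding Phi_def irls_mass_def sum.distrib sum_distrib_left[symmetric] sum_distrib_right[symmetric]
    by (simp add: v_def)
  also have "\<dots> = \<Phi> x - p/2 * irls_mass x * norm (x - v) ^ 2"
    by (simp add: power2_norm_eq_inner inner_diff_left inner_diff_right inner_commute algebra_simps)
  finally show ?thesis by (simp add: v_def)
qed

text \<open>Strong convexity on a sublevel set: \<open>p * irls_mass x *\<^sub>R (x - irls_step x)\<close> is the gradient of \<open>\<Phi>\<close> at \<open>x\<close>.\<close>

lemma Phi_lower_bound:
  assumes p: "1 \<le> p" "p \<le> 2"
    and Q: "\<And>j. j < n \<Longrightarrow> norm (x - a j) ^ 2 + eps \<le> Q" "\<And>j. j < n \<Longrightarrow> norm (y - a j) ^ 2 + eps \<le> Q"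
  shows "\<Phi> x + p * irls_mass x * inner (x - irls_step x) (y - x)
           + p/2 * eps * Q powr (p/2 - 2) * (\<Sum>j<n. w j) * norm (y - x) ^ 2 \<le> \<Phi> y"
proof -
  define k where "k = p/2 * eps * Q powr (p/2 - 2)"
  have term_le: "w j * (norm (x - a j) ^ 2 + eps) powr (p/2) + p * (\<mu> x j * inner (x - a j) (y - x))
      + k * w j * norm (y - x) ^ 2 \<le> w j * (norm (y - a j) ^ 2 + eps) powr (p/2)" if "j < n" for j
  proof -
    have "(norm (x - a j) ^ 2 + eps) powr (p/2)
          + 2 * (p/2) * (norm (x - a j) ^ 2 + eps) powr (p/2 - 1) * inner (x - a j) (y - x)
          + k * norm (y - x) ^ 2 \<le> (norm (y - a j) ^ 2 + eps) powr (p/2)"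
      using powr_norm_sq_lower_bound[OF eps_pos, of "p/2" "x - a j" Q "y - x"] p Q[OF that]
      by (simp add: k_def)
    from mult_left_mono[OF this less_imp_le[OF w_pos[OF that]]] show ?thesis
      by (simp add: irls_mu_def distrib_left mult_ac)
  qed
  have "(\<Sum>j<n. w j * (norm (x - a j) ^ 2 + eps) powr (p/2) + p * (\<mu> x j * inner (x - a j) (y - x))
      + k * w j * norm (y - x) ^ 2) \<le> \<Phi> y"
    unfolding Phi_def using term_le by (intro sum_mono) auto
  moreover have "(\<Sum>j<n. w j * (norm (x - a j) ^ 2 + eps) powr (p/2) + p * (\<mu> x j * inner (x - a j) (y - x))
      + k * w j * norm (y - x) ^ 2) = \<Phi> x + p * (\<Sum>j<n. \<mu> x j * inner (x - a j) (y - x))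
      + k * (\<Sum>j<n. w j) * norm (y - x) ^ 2"
    unfolding Phi_def sum.distrib sum_distrib_left[symmetric] sum_distrib_right[symmetric] by (simp add: mult.assoc)
  ultimately show ?thesis
    using sum_irls_mu_inner[of x "y - x"] by (simp add: k_def mult.assoc)
qed

lemma dist_sq_le_of_Phi_le:
  assumes "0 < p" "\<Phi> y \<le> P" "j < n"
  shows "norm (y - a j) ^ 2 + eps \<le> (\<Sum>i<n. (P / w i) powr (2/p))"
proof -
  define u where "u = norm (y - a j) ^ 2 + eps"
  have "w j * u powr (p/2) \<le> \<Phi> y"
    unfolding Phi_def u_def using assms(3) w_pos
    by (intro member_le_sum[where f = "\<lambda>i. w i * (norm (y - a i)^2 + eps) powr (p/2)"])
       (auto intro!: mult_nonneg_nonneg less_imp_le[OF w_pos])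
  then have "u powr (p/2) \<le> P / w j"
    using assms(2) w_pos[OF assms(3)] by (simp add: pos_le_divide_eq mult.commute)
  then have "u \<le> (P / w j) powr (2/p)"
    using powr_mono2[of "2/p" "u powr (p/2)" "P / w j"] assms(1) dist_sq_eps_pos
    by (simp add: u_def powr_powr)
  also have "\<dots> \<le> (\<Sum>i<n. (P / w i) powr (2/p))"
    using assms(3) by (intro member_le_sum) auto
  finally show ?thesis by (simp add: u_def)
qed

lemma Phi_irls_step_contraction:
  assumes p: "1 \<le> p" "p \<le> 2" and min: "\<And>y. \<Phi> xmin \<le> \<Phi> y"
    and Q: "\<And>j. j < n \<Longrightarrow> norm (x - a j) ^ 2 + eps \<le> Q"
      "\<And>j. j < n \<Longrightarrow> norm (xmin - a j) ^ 2 + eps \<le> Q"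
  shows "\<Phi> (irls_step x) - \<Phi> xmin \<le> (1 - (eps / Q) powr (2 - p/2)) * (\<Phi> x - \<Phi> xmin)"
proof -
  define W where "W = (\<Sum>j<n. w j)"
  define m where "m = p/2 * eps * Q powr (p/2 - 2) * W"
  define C where "C = p/2 * (W * eps powr (p/2 - 1))"
  have "0 < W" unfolding W_def using n_pos w_pos by (intro sum_pos) auto
  have "0 < Q" using Q(2)[OF n_pos] dist_sq_eps_pos[of xmin 0] by linarith
  have growth: "\<Phi> x - 2 * (p/2 * irls_mass x) * norm (x - irls_step x) * norm (xmin - x) + m * norm (xmin - x) ^ 2
      \<le> \<Phi> xmin"
  proof -
    have "- (norm (x - irls_step x) * norm (xmin - x)) \<le> inner (x - irls_step x) (xmin - x)"
      using Cauchy_Schwarz_ineq2[of "x - irls_step x" "xmin - x"] by linarith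
    from mult_left_mono[OF this, of "p * irls_mass x"] have
      "- (p * irls_mass x * (norm (x - irls_step x) * norm (xmin - x))) \<le> p * irls_mass x * inner (x - irls_step x) (xmin - x)"
      using p irls_mass_pos[of x] by simp
    with Phi_lower_bound[OF p Q] show ?thesis
      by (simp add: m_def W_def mult.assoc)
  qed
  have "\<Phi> (irls_step x) - \<Phi> xmin \<le> (1 - m / C) * (\<Phi> x - \<Phi> xmin)"
  proof (rule linear_rate_of_descent_and_growth[OF _ _ _ min _ growth])
    show "0 < p/2 * irls_mass x" using p irls_mass_pos by simp
    show "p/2 * irls_mass x \<le> C" using p irls_mass_le by (simp add: C_def W_def)
    show "0 < m" using p eps_pos \<open>0 < W\<close> \<open>0 < Q\<close> by (simp add: m_def)
    show "\<Phi> (irls_step x) \<le> \<Phi> x - p/2 * irls_mass x * norm (x - irls_step x) ^ 2"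
      using p by (intro Phi_irls_step_le) auto
  qed
  also have "m / C = (eps / Q) powr (2 - p/2)"
    using p eps_pos \<open>0 < W\<close> \<open>0 < Q\<close>
    by (simp add: m_def C_def powr_divide powr_diff field_simps powr_add[symmetric])
  finally show ?thesis .
qed

end

theorem proposition6:
  fixes n :: nat and a :: "nat \<Rightarrow> 'a::euclidean_space" and w :: "nat \<Rightarrow> real"
    and eps p :: real and xstar :: 'a and x :: "nat \<Rightarrow> 'a"
  assumes "n \<ge> 1"
    and "\<And>j. j < n \<Longrightarrow> w j > 0"
    and "eps > 0" and "1 \<le> p" and "p \<le> 2"
    and "\<And>y. Phi n w a eps p xstar \<le> Phi n w a eps p y"
    and "\<And>t. x (Suc t) = (\<Sum>j<n. irls_mu w a eps p (x t) j *\<^sub>R a j) /\<^sub>R (\<Sum>j<n. irls_mu w a eps p (x t) j)"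
  shows "\<exists>\<nu><1. \<exists>T. \<forall>t\<ge>T.
           Phi n w a eps p (x (Suc t)) - Phi n w a eps p xstar
             \<le> \<nu> * (Phi n w a eps p (x t) - Phi n w a eps p xstar)"
proof -
  interpret smoothed_fermat n w a eps p
    using assms(1-3) by unfold_locales auto
  have x_Suc: "x (Suc t) = irls_step (x t)" for t
    using assms(7) by (simp add: irls_step_def irls_mass_def)
  have sublevel: "\<Phi> (x t) \<le> \<Phi> (x 0)" for t
  proof (induction t)
    case (Suc t)
    have "0 \<le> p/2 * irls_mass (x t) * norm (x t - irls_step (x t)) ^ 2"
      using assms(4) irls_mass_pos[of "x t"] by simp
    with Suc Phi_irls_step_le[of "x t"] assms(4,5) show ?case by (simp add: x_Suc)
  qed simp
  define Q where "Q = (\<Sum>i<n. (\<Phi> (x 0) / w i) powr (2/p))"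
  have dist_le_Q: "norm (y - a j) ^ 2 + eps \<le> Q" if "\<Phi> y \<le> \<Phi> (x 0)" "j < n" for y j
    unfolding Q_def using assms(4) that by (intro dist_sq_le_of_Phi_le) auto
  have "0 < Q"
    using dist_le_Q[OF sublevel n_pos, of 0] dist_sq_eps_pos[of "x 0" 0] by linarith
  then have "0 < (eps / Q) powr (2 - p/2)"
    using assms(3) by simp
  moreover have "\<Phi> (x (Suc t)) - \<Phi> xstar \<le> (1 - (eps / Q) powr (2 - p/2)) * (\<Phi> (x t) - \<Phi> xstar)" for t
    unfolding x_Suc using assms(4-6) dist_le_Q sublevel
    by (intro Phi_irls_step_contraction) auto
  ultimately show ?thesis
    by (intro exI[of _ "1 - (eps / Q) powr (2 - p/2)"]) auto
qed

end
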